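(* For any sign string $S$ and any state string $J$ of the same length, the web produced by the growth algorithm applied to $(S,J)$ does not depend on the order in which the replacements are performed.
   Context: A sign string is $S=(s_1,\dots,s_n)\in\{+,-\}^n$ and a state string is $J=(j_1,\dots,j_n)\in\{-1,0,1\}^n$. The growth algorithm builds an oriented planar graph downward from $n$ parallel strands (the $k$-th strand oriented upward toward its top endpoint if $s_k=+$ and downward if $s_k=-$), keeping a current pair (sign string, state string) describing the strands hanging at the bottom. A replacement acts on two adjacent positions $k,k+1$ with current signs $(s,s')$ and states $(j,j')$: (a) If $s'\ne s$: if $(j,j')=(1,0)$, $(0,0)$ or $(0,-1)$, attach an "H" (two trivalent vertices joined by a horizontal edge, the left vertex joined to strand $k$ above and to a new strand below, the right vertex likewise for strand $k+1$); the new signs at positions $k,k+1$ are $(s',s)$ and the new states are respectively $(0,1)$, $(-1,1)$, $(-1,0)$. If $(j,j')=(1,-1)$, join the two strands by a cup and delete both positions. (b) If $s'=s$: if $(j,j')=(1,0)$, $(0,-1)$ or $(1,-1)$, attach a "Y" (the two strands meet at a trivalent vertex whose third edge continues downward as a single strand); the two positions are replaced by one position with sign opposite to $s$ and state respectively $1$, $-1$, $0$. All trivalent vertices created are sources or sinks (all edges in or all out), consistently with the orientations. The algorithm repeatedly applies some applicable replacement and stops when none applies; the output is the graph built together with the remaining sign and state strings. *)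

theory Defs
  imports Main
begin

(* Signs: True = '+', False = '-'.  States: integers in {-1,0,1}.

   A web is encoded as a combinatorial map (rotation system) on a finite
   set of darts (half-edges), with orientation and boundary labels:
     darts : the set of darts
     wopp  : fixed-point-free involution pairing the two darts of an edge
     wnxt  : permutation whose cycles are the vertices (cyclic
             counterclockwise order of the edges at that vertex)
     wout  : True iff the edge of this dart is oriented away from its vertex
     wlab  : boundary points (univalent vertices) carry a label: the k-th
             top endpoint (0-based) or the i-th bottom endpoint (0-based,
             left to right); internal vertices carry None. *)

datatype bpt = TopPt nat | BotPt nat

record web =
  darts :: "nat set"
  wopp :: "nat \<Rightarrow> nat"
  wnxt :: "nat \<Rightarrow> nat"
  wout :: "nat \<Rightarrow> bool"
  wlab :: "nat \<Rightarrow> bpt option"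

(* Two webs are the same (planar isotopy rel boundary) iff there is an
   isomorphism of oriented labelled combinatorial maps. *)
definition web_iso :: "web \<Rightarrow> web \<Rightarrow> bool" where
  "web_iso W1 W2 \<longleftrightarrow> (\<exists>f. bij_betw f (darts W1) (darts W2) \<and>
     (\<forall>d\<in>darts W1. f (wopp W1 d) = wopp W2 (f d) \<and> f (wnxt W1 d) = wnxt W2 (f d)
        \<and> wout W2 (f d) = wout W1 d \<and> wlab W2 (f d) = wlab W1 d))"

(* Configuration of the growth algorithm.  strs is the list of strands
   hanging at the bottom, each given as (current sign, current state,
   dart at the upper end of the strand).  Darts 0..<cnt have been created;
   the partial map is stored in copp/cnxt/cout/clab. *)
record cfg =
  strs :: "(bool \<times> int \<times> nat) list"
  cnt :: nat
  copp :: "nat \<Rightarrow> nat"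
  cnxt :: "nat \<Rightarrow> nat"
  cout :: "nat \<Rightarrow> bool"
  clab :: "nat \<Rightarrow> bpt option"

(* Initial configuration: n top endpoints, dart k for the k-th one.
   Strand k oriented upward (toward the top point) iff s_k = +, so the
   edge points away from the top point iff s_k = -. *)
definition ginit :: "bool list \<Rightarrow> int list \<Rightarrow> cfg" where
  "ginit S J = \<lparr> strs = zip S (zip J [0..<length S]), cnt = length S,
     copp = id, cnxt = id, cout = (\<lambda>d. if d < length S then \<not> S ! d else False),
     clab = (\<lambda>d. if d < length S then Some (TopPt d) else None) \<rparr>"

(* One replacement of the growth algorithm at adjacent positions
   k = length xs, k+1.  Counterclockwise rotations:
   Y vertex: upper-right -> upper-left -> down;
   H left vertex: right -> up -> down;  H right vertex: up -> left -> down. *)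
inductive gstep :: "cfg \<Rightarrow> cfg \<Rightarrow> bool" where
  H: "strs c = xs @ (s, j, d) # (s', j', d') # ys \<Longrightarrow> s' \<noteq> s \<Longrightarrow>
      (j, j', nj, nj') \<in> {(1, 0, 0, 1), (0, 0, -1, 1), (0, -1, -1, 0)} \<Longrightarrow> N = cnt c \<Longrightarrow>
      gstep c (c\<lparr> strs := xs @ (s', nj, N + 2) # (s, nj', N + 5) # ys,
                  cnt := N + 6,
                  copp := (copp c)(d := N, N := d, d' := N + 3, N + 3 := d',
                                   N + 1 := N + 4, N + 4 := N + 1),
                  cnxt := (cnxt c)(N + 1 := N, N := N + 2, N + 2 := N + 1,
                                   N + 3 := N + 4, N + 4 := N + 5, N + 5 := N + 3),
                  cout := (cout c)(N := s, N + 1 := s, N + 2 := s,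
                                   N + 3 := s', N + 4 := s', N + 5 := s'),
                  clab := (clab c)(N := None, N + 1 := None, N + 2 := None,
                                   N + 3 := None, N + 4 := None, N + 5 := None) \<rparr>)"
| Cup: "strs c = xs @ (s, j, d) # (s', j', d') # ys \<Longrightarrow> s' \<noteq> s \<Longrightarrow>
      (j, j') = (1, -1) \<Longrightarrow>
      gstep c (c\<lparr> strs := xs @ ys, copp := (copp c)(d := d', d' := d) \<rparr>)"
| Y: "strs c = xs @ (s, j, d) # (s', j', d') # ys \<Longrightarrow> s' = s \<Longrightarrow>
      (j, j', nj) \<in> {(1, 0, 1), (0, -1, -1), (1, -1, 0)} \<Longrightarrow> N = cnt c \<Longrightarrow>
      gstep c (c\<lparr> strs := xs @ (\<not> s, nj, N + 2) # ys,
                  cnt := N + 3,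
                  copp := (copp c)(d := N, N := d, d' := N + 1, N + 1 := d'),
                  cnxt := (cnxt c)(N + 1 := N, N := N + 2, N + 2 := N + 1),
                  cout := (cout c)(N := s, N + 1 := s, N + 2 := s),
                  clab := (clab c)(N := None, N + 1 := None, N + 2 := None) \<rparr>)"

definition gfinal :: "cfg \<Rightarrow> bool" where
  "gfinal c \<longleftrightarrow> \<not> (\<exists>c'. gstep c c')"

definition close_web :: "cfg \<Rightarrow> web" where
  "close_web c = (let N = cnt c; m = length (strs c) in
     foldr (\<lambda>(i, (s, j, d)) W.
              W\<lparr> wopp := (wopp W)(d := N + i, N + i := d),
                  wnxt := (wnxt W)(N + i := N + i),
                  wout := (wout W)(N + i := s),
                  wlab := (wlab W)(N + i := Some (BotPt i)) \<rparr>)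
           (zip [0..<m] (strs c))
           \<lparr> darts = {..<N + m}, wopp = copp c, wnxt = cnxt c,
             wout = cout c, wlab = clab c \<rparr>)"

end

theory Submission
  imports Defs
begin

(* The growth algorithm is a rewriting system on configurations (the hanging strands together
   with the partial combinatorial map built so far).  Different orders of replacements give
   isomorphic rather than equal maps, because new darts are named by a counter, so the claim is
   uniqueness of normal forms up to renaming darts.  Newman's lemma, in a version modulo such an
   equivalence, reduces this to termination and local confluence.  Termination: a cup or a Y
   shortens the list of strands, and an H keeps its length but raises the weighted state sum
   Sum_k k * j_k by exactly one, which is bounded by the square of the length.  Local
   confluence: every replacement attaches a gadget, with its own block of new darts, to two
   adjacent strands.  Replacements at disjoint positions commute up to swapping the two blocks,
   and each of the four ways in which two replacements overlap (YY, YH, HH, HY) is closed by one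
   further replacement on either side, after which the configurations agree up to a permutation
   of the new darts.  Finally, isomorphic configurations close up to isomorphic webs. *)

section \<open>Newman's lemma modulo an equivalence\<close>

(* equiv need only be symmetric on inv-states: an isomorphism of configurations can be inverted
   only when copp and cnxt map the darts below cnt into themselves. *)
locale terminating_modulo =
  fixes step :: "'a \<Rightarrow> 'a \<Rightarrow> bool" and equiv :: "'a \<Rightarrow> 'a \<Rightarrow> bool" and inv :: "'a \<Rightarrow> bool"
  assumes wf_step: "wf {(y, x). inv x \<and> step x y}"
    and inv_step: "step x y \<Longrightarrow> inv x \<Longrightarrow> inv y"
    and equiv_refl: "equiv x x"
    and equiv_sym: "inv x \<Longrightarrow> equiv x y \<Longrightarrow> equiv y x"
    and equiv_trans: "equiv x y \<Longrightarrow> equiv y z \<Longrightarrow> equiv x z"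
    and step_equiv: "inv x \<Longrightarrow> inv x' \<Longrightarrow> equiv x x' \<Longrightarrow> step x y \<Longrightarrow> \<exists>y'. step x' y' \<and> equiv y y'"
    and local_confluence:
      "inv x \<Longrightarrow> step x y \<Longrightarrow> step x z \<Longrightarrow> \<exists>y' z'. step\<^sup>*\<^sup>* y y' \<and> step\<^sup>*\<^sup>* z z' \<and> equiv y' z'"
begin

definition normal :: "'a \<Rightarrow> bool" where
  "normal x \<longleftrightarrow> (\<nexists>y. step x y)"

lemma inv_steps: "step\<^sup>*\<^sup>* x y \<Longrightarrow> inv x \<Longrightarrow> inv y"
  by (induction rule: rtranclp_induct) (auto intro: inv_step)

lemma normal_form_exists: "inv x \<Longrightarrow> \<exists>n. step\<^sup>*\<^sup>* x n \<and> normal n"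
proof (induction x rule: wf_induct_rule[OF wf_step])
  case (1 x)
  show ?case
  proof (cases "normal x")
    case False
    then obtain y where y: "step x y" by (auto simp: normal_def)
    then obtain n where "step\<^sup>*\<^sup>* y n" "normal n" using 1 inv_step by blast
    then show ?thesis using y by (meson converse_rtranclp_into_rtranclp)
  qed blast
qed

lemma steps_equiv:
  "step\<^sup>*\<^sup>* x y \<Longrightarrow> inv x \<Longrightarrow> inv x' \<Longrightarrow> equiv x x' \<Longrightarrow> \<exists>y'. step\<^sup>*\<^sup>* x' y' \<and> equiv y y'"
proof (induction arbitrary: x' rule: converse_rtranclp_induct)
  case (step x z)
  obtain z' where z': "step x' z'" "equiv z z'" using step_equiv step.hyps(1) step.prems by blast
  then obtain y' where "step\<^sup>*\<^sup>* z' y'" "equiv y y'"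
    using step.IH inv_step step.hyps(1) step.prems by blast
  then show ?case using z'(1) by (meson converse_rtranclp_into_rtranclp)
qed blast

lemma normal_equiv: "inv x \<Longrightarrow> inv x' \<Longrightarrow> equiv x x' \<Longrightarrow> normal x \<Longrightarrow> normal x'"
  unfolding normal_def using step_equiv equiv_sym by blast

lemma steps_from_normal: "step\<^sup>*\<^sup>* x y \<Longrightarrow> normal x \<Longrightarrow> y = x"
  by (auto simp: normal_def elim: converse_rtranclpE)

theorem normal_forms_equiv:
  "inv x \<Longrightarrow> step\<^sup>*\<^sup>* x y \<Longrightarrow> normal y \<Longrightarrow> step\<^sup>*\<^sup>* x z \<Longrightarrow> normal z \<Longrightarrow> equiv y z"
proof (induction x arbitrary: y z rule: wf_induct_rule[OF wf_step])
  case (1 x)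
  show ?case
  proof (cases "normal x")
    case True
    then show ?thesis using steps_from_normal 1(3,5) equiv_refl by metis
  next
    case False
    then have "y \<noteq> x" "z \<noteq> x" using 1(4,6) by auto
    then obtain a b where a: "step x a" "step\<^sup>*\<^sup>* a y" and b: "step x b" "step\<^sup>*\<^sup>* b z"
      using 1(3,5) converse_rtranclpE[of step x y] converse_rtranclpE[of step x z] by metis
    obtain a' b' where ab: "step\<^sup>*\<^sup>* a a'" "step\<^sup>*\<^sup>* b b'" "equiv a' b'"
      using local_confluence[OF 1(2) a(1) b(1)] by blast
    have inv: "inv a" "inv b" using inv_step a(1) b(1) 1(2) by blast+
    then have inv': "inv a'" "inv b'" using inv_steps ab(1,2) by blast+
    obtain n where n: "step\<^sup>*\<^sup>* a' n" "normal n" using normal_form_exists[OF inv'(1)] by blast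
    obtain n' where n': "step\<^sup>*\<^sup>* b' n'" "equiv n n'" using steps_equiv[OF n(1) inv' ab(3)] by blast
    have inv_n: "inv n" "inv n'" using inv_steps n(1) n'(1) inv' by blast+
    have "normal n'" using normal_equiv[OF inv_n n'(2) n(2)] .
    have "(a, x) \<in> {(y, x). inv x \<and> step x y}" "(b, x) \<in> {(y, x). inv x \<and> step x y}"
      using 1(2) a(1) b(1) by simp_all
    then have yn: "equiv y n" and zn': "equiv z n'"
      using 1(1)[OF _ inv(1) a(2) 1(4) rtranclp_trans[OF ab(1) n(1)] n(2)]
        1(1)[OF _ inv(2) b(2) 1(6) rtranclp_trans[OF ab(2) n'(1)] \<open>normal n'\<close>] by blast+
    have "inv z" using inv_steps[OF b(2) inv(2)] .
    show ?thesis using equiv_trans[OF equiv_trans[OF yn n'(2)] equiv_sym[OF \<open>inv z\<close> zn']] .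
  qed
qed

end

section \<open>Replacements as gadgets\<close>

type_synonym strand = "bool \<times> int \<times> nat"

definition dart :: "strand \<Rightarrow> nat" where
  "dart e = snd (snd e)"

definition state :: "strand \<Rightarrow> int" where
  "state e = fst (snd e)"

definition map_dart :: "(nat \<Rightarrow> nat) \<Rightarrow> strand \<Rightarrow> strand" where
  "map_dart f e = (fst e, state e, f (dart e))"

lemma strand_simps [simp]:
  "dart (s, j, d) = d" "state (s, j, d) = j" "map_dart f (s, j, d) = (s, j, f d)"
  by (simp_all add: dart_def state_def map_dart_def)

lemma dart_map_dart [simp]: "dart (map_dart f e) = f (dart e)"
  and state_map_dart [simp]: "state (map_dart f e) = state e"
  by (simp_all add: map_dart_def dart_def state_def)

datatype port = Lft | Rgt | New nat

fun port_dart :: "nat \<Rightarrow> nat \<Rightarrow> nat \<Rightarrow> port \<Rightarrow> nat" where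
  "port_dart N d d' Lft = d"
| "port_dart N d d' Rgt = d'"
| "port_dart N d d' (New i) = N + i"

fun valid_port :: "nat \<Rightarrow> port \<Rightarrow> bool" where
  "valid_port K (New i) \<longleftrightarrow> i < K"
| "valid_port K _ \<longleftrightarrow> True"

(* A gadget has gsize new darts, numbered locally from 0 and placed at cnt c + i; the ports
   Lft and Rgt stand for the upper ends of the two consumed strands. *)
record gadget =
  gsize :: nat
  glink :: "port \<Rightarrow> port"
  grot :: "nat \<Rightarrow> nat"
  gori :: "nat \<Rightarrow> bool"
  gouts :: "strand list"

definition attach :: "gadget \<Rightarrow> strand list \<Rightarrow> nat \<Rightarrow> nat \<Rightarrow> strand list \<Rightarrow> cfg \<Rightarrow> cfg" where
  "attach G xs d d' ys c = (let N = cnt c; new = (\<lambda>x. N \<le> x \<and> x < N + gsize G) in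
     c\<lparr> strs := xs @ map (map_dart ((+) N)) (gouts G) @ ys,
        cnt := N + gsize G,
        copp := \<lambda>x. if x = d then port_dart N d d' (glink G Lft)
                    else if x = d' then port_dart N d d' (glink G Rgt)
                    else if new x then port_dart N d d' (glink G (New (x - N)))
                    else copp c x,
        cnxt := \<lambda>x. if new x then N + grot G (x - N) else cnxt c x,
        cout := \<lambda>x. if new x then gori G (x - N) else cout c x,
        clab := \<lambda>x. if new x then None else clab c x \<rparr>)"

fun pairing :: "(port \<times> port) list \<Rightarrow> port \<Rightarrow> port" where
  "pairing [] p = p"
| "pairing ((a, b) # r) p = (if p = a then b else if p = b then a else pairing r p)"

definition cup_gadget :: gadget where
  "cup_gadget = \<lparr> gsize = 0, glink = pairing [(Lft, Rgt)], grot = id, gori = (\<lambda>_. False),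
     gouts = [] \<rparr>"

definition Y_gadget :: "bool \<Rightarrow> int \<Rightarrow> gadget" where
  "Y_gadget s nj = \<lparr> gsize = 3, glink = pairing [(Lft, New 0), (Rgt, New 1)],
     grot = (!) [2, 0, 1], gori = (\<lambda>_. s), gouts = [(\<not> s, nj, 2)] \<rparr>"

(* Local darts as in rule gstep.H: 0 (up), 1 (horizontal), 2 (down) at the left vertex and
   3, 4, 5 at the right one. *)
definition H_gadget :: "bool \<Rightarrow> bool \<Rightarrow> int \<Rightarrow> int \<Rightarrow> gadget" where
  "H_gadget s s' nj nj' = \<lparr> gsize = 6, glink = pairing [(Lft, New 0), (Rgt, New 3), (New 1, New 4)],
     grot = (!) [2, 0, 1, 4, 5, 3], gori = (\<lambda>i. if i < 3 then s else s'),
     gouts = [(s', nj, 2), (s, nj', 5)] \<rparr>"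

fun replacement :: "strand \<Rightarrow> strand \<Rightarrow> gadget option" where
  "replacement (s, j, _) (s', j', _) =
     (if s' \<noteq> s \<and> (j, j') \<in> {(1, 0), (0, 0), (0, -1)} then Some (H_gadget s s' (j - 1) (j' + 1))
      else if s' \<noteq> s \<and> (j, j') = (1, -1) then Some cup_gadget
      else if s' = s \<and> (j, j') \<in> {(1, 0), (0, -1), (1, -1)} then Some (Y_gadget s (j + j'))
      else None)"

lemma replacement_eq_Some_iff:
  "replacement (s, j, d) (s', j', d') = Some G \<longleftrightarrow>
     s' \<noteq> s \<and> (j, j') \<in> {(1, 0), (0, 0), (0, -1)} \<and> G = H_gadget s s' (j - 1) (j' + 1)
   \<or> s' \<noteq> s \<and> (j, j') = (1, -1) \<and> G = cup_gadget
   \<or> s' = s \<and> (j, j') \<in> {(1, 0), (0, -1), (1, -1)} \<and> G = Y_gadget s (j + j')"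
  by auto

declare replacement.simps [simp del]

lemma gadget_fields [simp]:
  "gsize cup_gadget = 0" "glink cup_gadget = pairing [(Lft, Rgt)]" "gouts cup_gadget = []"
  "gsize (Y_gadget s nj) = 3" "glink (Y_gadget s nj) = pairing [(Lft, New 0), (Rgt, New 1)]"
  "grot (Y_gadget s nj) = (!) [2, 0, 1]" "gori (Y_gadget s nj) = (\<lambda>_. s)"
  "gouts (Y_gadget s nj) = [(\<not> s, nj, 2)]"
  "gsize (H_gadget s s' nj nj') = 6"
  "glink (H_gadget s s' nj nj') = pairing [(Lft, New 0), (Rgt, New 3), (New 1, New 4)]"
  "grot (H_gadget s s' nj nj') = (!) [2, 0, 1, 4, 5, 3]"
  "gori (H_gadget s s' nj nj') = (\<lambda>i. if i < 3 then s else s')"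
  "gouts (H_gadget s s' nj nj') = [(s', nj, 2), (s, nj', 5)]"
  by (simp_all add: cup_gadget_def Y_gadget_def H_gadget_def)

lemma attach_fields:
  "strs (attach G xs d d' ys c) = xs @ map (map_dart ((+) (cnt c))) (gouts G) @ ys"
  "cnt (attach G xs d d' ys c) = cnt c + gsize G"
  "copp (attach G xs d d' ys c) x =
     (if x = d then port_dart (cnt c) d d' (glink G Lft)
      else if x = d' then port_dart (cnt c) d d' (glink G Rgt)
      else if cnt c \<le> x \<and> x < cnt c + gsize G then port_dart (cnt c) d d' (glink G (New (x - cnt c)))
      else copp c x)"
  "cnxt (attach G xs d d' ys c) x =
     (if cnt c \<le> x \<and> x < cnt c + gsize G then cnt c + grot G (x - cnt c) else cnxt c x)"
  "cout (attach G xs d d' ys c) x =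
     (if cnt c \<le> x \<and> x < cnt c + gsize G then gori G (x - cnt c) else cout c x)"
  "clab (attach G xs d d' ys c) x =
     (if cnt c \<le> x \<and> x < cnt c + gsize G then None else clab c x)"
  "cfg.more (attach G xs d d' ys c) = cfg.more c"
  by (simp_all add: attach_def Let_def)

lemma attach_at_old:
  assumes "x < cnt c"
  shows "x = d \<Longrightarrow> copp (attach G xs d d' ys c) x = port_dart (cnt c) d d' (glink G Lft)"
    and "x \<noteq> d \<Longrightarrow> x = d' \<Longrightarrow> copp (attach G xs d d' ys c) x = port_dart (cnt c) d d' (glink G Rgt)"
    and "x \<noteq> d \<Longrightarrow> x \<noteq> d' \<Longrightarrow> copp (attach G xs d d' ys c) x = copp c x"
    and "cnxt (attach G xs d d' ys c) x = cnxt c x"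
    and "cout (attach G xs d d' ys c) x = cout c x"
    and "clab (attach G xs d d' ys c) x = clab c x"
  using assms by (simp_all add: attach_fields)

lemma attach_at_new:
  assumes "cnt c \<le> x" "x < cnt c + gsize G" "d < cnt c" "d' < cnt c"
  shows "copp (attach G xs d d' ys c) x = port_dart (cnt c) d d' (glink G (New (x - cnt c)))"
    and "cnxt (attach G xs d d' ys c) x = cnt c + grot G (x - cnt c)"
    and "cout (attach G xs d d' ys c) x = gori G (x - cnt c)"
    and "clab (attach G xs d d' ys c) x = None"
  using assms by (simp_all add: attach_fields)

lemma attach_cup:
  assumes "d \<noteq> d'"
  shows "attach cup_gadget xs d d' ys c = c\<lparr> strs := xs @ ys, copp := (copp c)(d := d', d' := d) \<rparr>"
  using assms by (intro cfg.equality) (auto simp: attach_fields fun_eq_iff)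

(* The rules of gstep leave copp alone on the new down-going darts, while attach makes them
   fixed points; the two agree because copp is the identity beyond cnt c. *)
lemma attach_Y:
  assumes "d < cnt c" "d' < cnt c" "d \<noteq> d'" "\<And>x. cnt c \<le> x \<Longrightarrow> copp c x = x"
  shows "attach (Y_gadget s nj) xs d d' ys c = (let N = cnt c in
      c\<lparr> strs := xs @ (\<not> s, nj, N + 2) # ys,
                  cnt := N + 3,
                  copp := (copp c)(d := N, N := d, d' := N + 1, N + 1 := d'),
                  cnxt := (cnxt c)(N + 1 := N, N := N + 2, N + 2 := N + 1),
                  cout := (cout c)(N := s, N + 1 := s, N + 2 := s),
                  clab := (clab c)(N := None, N + 1 := None, N + 2 := None) \<rparr>)"
  using assms by (intro cfg.equality) (auto simp: attach_fields fun_eq_iff Let_def)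

lemma attach_H:
  assumes "d < cnt c" "d' < cnt c" "d \<noteq> d'" "\<And>x. cnt c \<le> x \<Longrightarrow> copp c x = x"
  shows "attach (H_gadget s s' nj nj') xs d d' ys c = (let N = cnt c in
      c\<lparr> strs := xs @ (s', nj, N + 2) # (s, nj', N + 5) # ys,
                  cnt := N + 6,
                  copp := (copp c)(d := N, N := d, d' := N + 3, N + 3 := d',
                                   N + 1 := N + 4, N + 4 := N + 1),
                  cnxt := (cnxt c)(N + 1 := N, N := N + 2, N + 2 := N + 1,
                                   N + 3 := N + 4, N + 4 := N + 5, N + 5 := N + 3),
                  cout := (cout c)(N := s, N + 1 := s, N + 2 := s,
                                   N + 3 := s', N + 4 := s', N + 5 := s'),
                  clab := (clab c)(N := None, N + 1 := None, N + 2 := None,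
                                   N + 3 := None, N + 4 := None, N + 5 := None) \<rparr>)"
  using assms by (intro cfg.equality) (auto simp: attach_fields fun_eq_iff Let_def)

section \<open>Well-formed configurations\<close>

definition wf_cfg :: "cfg \<Rightarrow> bool" where
  "wf_cfg c \<longleftrightarrow> distinct (map dart (strs c))
     \<and> dart ` set (strs c) \<subseteq> {..<cnt c} \<and> state ` set (strs c) \<subseteq> {-1, 0, 1}
     \<and> copp c ` {..<cnt c} \<subseteq> {..<cnt c} \<and> cnxt c ` {..<cnt c} \<subseteq> {..<cnt c}
     \<and> (\<forall>x. x \<in> dart ` set (strs c) \<or> cnt c \<le> x \<longrightarrow> copp c x = x)"

lemma wf_cfgI:
  assumes "distinct (map dart (strs c))"
    and "dart ` set (strs c) \<subseteq> {..<cnt c}" "state ` set (strs c) \<subseteq> {-1, 0, 1}"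
    and "\<And>x. x < cnt c \<Longrightarrow> copp c x < cnt c" "\<And>x. x < cnt c \<Longrightarrow> cnxt c x < cnt c"
    and "\<And>x. x \<in> dart ` set (strs c) \<or> cnt c \<le> x \<Longrightarrow> copp c x = x"
  shows "wf_cfg c"
  using assms unfolding wf_cfg_def by blast

lemma wf_cfgD:
  assumes "wf_cfg c"
  shows "distinct (map dart (strs c))"
    and "e \<in> set (strs c) \<Longrightarrow> dart e < cnt c"
    and "e \<in> set (strs c) \<Longrightarrow> state e \<in> {-1, 0, 1}"
    and "x < cnt c \<Longrightarrow> copp c x < cnt c"
    and "x < cnt c \<Longrightarrow> cnxt c x < cnt c"
    and "cnt c \<le> x \<Longrightarrow> copp c x = x"
  using assms by (auto simp: wf_cfg_def)

lemma wf_cfg_redex: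
  assumes "wf_cfg c" "strs c = xs @ (s, j, d) # (s', j', d') # ys"
  shows "d < cnt c" "d' < cnt c" "d \<noteq> d'" "\<And>x. cnt c \<le> x \<Longrightarrow> copp c x = x"
  using assms by (auto simp: wf_cfg_def)

lemma gstep_attachE:
  assumes "gstep c c'" "wf_cfg c"
  obtains xs A B ys G where "strs c = xs @ A # B # ys" "replacement A B = Some G"
    "c' = attach G xs (dart A) (dart B) ys c"
  using assms(1)
proof cases
  case (H xs s j d s' j' d' ys nj nj')
  have "replacement (s, j, d) (s', j', d') = Some (H_gadget s s' nj nj')"
    using H(3,4) by (auto simp: replacement_eq_Some_iff)
  moreover have "c' = attach (H_gadget s s' nj nj') xs d d' ys c"
    using H(1,5) attach_H[OF wf_cfg_redex[OF assms(2) H(2)]] by (simp add: Let_def)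
  ultimately show ?thesis using that H(2) by (metis strand_simps(1))
next
  case (Cup xs s j d s' j' d' ys)
  have "replacement (s, j, d) (s', j', d') = Some cup_gadget"
    using Cup(3,4) by (auto simp: replacement_eq_Some_iff)
  moreover have "c' = attach cup_gadget xs d d' ys c"
    using Cup(1) attach_cup[OF wf_cfg_redex(3)[OF assms(2) Cup(2)]] by simp
  ultimately show ?thesis using that Cup(2) by (metis strand_simps(1))
next
  case (Y xs s j d s' j' d' ys nj)
  have "replacement (s, j, d) (s', j', d') = Some (Y_gadget s nj)"
    using Y(3,4) by (auto simp: replacement_eq_Some_iff)
  moreover have "c' = attach (Y_gadget s nj) xs d d' ys c"
    using Y(1,5) attach_Y[OF wf_cfg_redex[OF assms(2) Y(2)]] by (simp add: Let_def)
  ultimately show ?thesis using that Y(2) by (metis strand_simps(1))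
qed

lemma gstep_attachI:
  assumes c: "wf_cfg c" and st: "strs c = xs @ A # B # ys" and G: "replacement A B = Some G"
  shows "gstep c (attach G xs (dart A) (dart B) ys c)"
proof -
  obtain s j d s' j' d' where AB: "A = (s, j, d)" "B = (s', j', d')" by (cases A, cases B) auto
  note st = st[unfolded AB] and redex = wf_cfg_redex[OF c st[unfolded AB]]
  from G[unfolded AB replacement_eq_Some_iff] show ?thesis
  proof (elim disjE conjE)
    assume "s' \<noteq> s" "(j, j') \<in> {(1, 0), (0, 0), (0, -1)}" "G = H_gadget s s' (j - 1) (j' + 1)"
    then show ?thesis
      using gstep.H[OF st, of "j - 1" "j' + 1" "cnt c"] attach_H[OF redex] AB by (auto simp: Let_def)
  next
    assume "s' \<noteq> s" "(j, j') = (1, -1)" "G = cup_gadget"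
    then show ?thesis using gstep.Cup[OF st] attach_cup[OF redex(3)] AB by simp
  next
    assume "s' = s" "(j, j') \<in> {(1, 0), (0, -1), (1, -1)}" "G = Y_gadget s (j + j')"
    then show ?thesis
      using gstep.Y[OF st, of "j + j'" "cnt c"] attach_Y[OF redex] AB by (auto simp: Let_def)
  qed
qed

definition gadget_ok :: "gadget \<Rightarrow> bool" where
  "gadget_ok G \<longleftrightarrow> (\<forall>p. valid_port (gsize G) p \<longrightarrow> valid_port (gsize G) (glink G p))
     \<and> grot G ` {..<gsize G} \<subseteq> {..<gsize G}
     \<and> distinct (map dart (gouts G)) \<and> dart ` set (gouts G) \<subseteq> {..<gsize G}
     \<and> state ` set (gouts G) \<subseteq> {-1, 0, 1}
     \<and> (\<forall>i\<in>dart ` set (gouts G). glink G (New i) = New i)"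

lemma all_port: "(\<forall>p. P p) \<longleftrightarrow> P Lft \<and> P Rgt \<and> (\<forall>i. P (New i))"
  by (metis port.exhaust)

lemma cup_gadget_ok: "gadget_ok cup_gadget"
  by (simp add: gadget_ok_def all_port)

lemma Y_gadget_ok: "nj \<in> {-1, 0, 1} \<Longrightarrow> gadget_ok (Y_gadget s nj)"
  by (simp add: gadget_ok_def all_port less_Suc_eq numeral_eq_Suc lessThan_Suc)

lemma H_gadget_ok: "nj \<in> {-1, 0, 1} \<Longrightarrow> nj' \<in> {-1, 0, 1} \<Longrightarrow> gadget_ok (H_gadget s s' nj nj')"
  by (simp add: gadget_ok_def all_port less_Suc_eq numeral_eq_Suc lessThan_Suc)

lemma distinct_middle:
  "distinct (as @ bs @ cs) \<longleftrightarrow> distinct (as @ cs) \<and> distinct bs \<and> set bs \<inter> set (as @ cs) = {}"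
  by auto

lemma port_dart_less:
  "valid_port K p \<Longrightarrow> d < N \<Longrightarrow> d' < N \<Longrightarrow> port_dart N d d' p < N + K"
  by (cases p) auto

lemma dart_image_attach:
  "dart ` set (strs (attach G xs d d' ys c))
     = dart ` (set xs \<union> set ys) \<union> (+) (cnt c) ` dart ` set (gouts G)"
  by (simp add: attach_fields image_Un image_image Un_ac)

lemma state_image_attach:
  "state ` set (strs (attach G xs d d' ys c)) = state ` (set xs \<union> set ys) \<union> state ` set (gouts G)"
  by (simp add: attach_fields image_Un image_image Un_ac)

lemma distinct_darts_attach:
  assumes c: "wf_cfg c" and st: "strs c = xs @ A # B # ys" and G: "gadget_ok G"
  shows "distinct (map dart (strs (attach G xs (dart A) (dart B) ys c)))"
proof -
  let ?N = "cnt c"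
  have "map dart (strs (attach G xs (dart A) (dart B) ys c))
          = map dart xs @ map ((+) ?N) (map dart (gouts G)) @ map dart ys"
    by (simp add: attach_fields)
  moreover have "distinct (map ((+) ?N) (map dart (gouts G)))"
    using G by (simp add: gadget_ok_def distinct_map comp_inj_on)
  moreover have "distinct (map dart xs @ map dart ys)"
    using wf_cfgD(1)[OF c] st by simp
  moreover have "dart ` (set xs \<union> set ys) \<subseteq> {..<?N}" using c st by (auto simp: wf_cfg_def)
  then have "set (map ((+) ?N) (map dart (gouts G))) \<inter> set (map dart xs @ map dart ys) = {}"
    by auto
  ultimately show ?thesis by (simp only: distinct_middle)
qed

lemma attach_closed:
  assumes c: "wf_cfg c" and st: "strs c = xs @ A # B # ys" and G: "gadget_ok G"
    and x: "x < cnt (attach G xs (dart A) (dart B) ys c)"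
  shows "copp (attach G xs (dart A) (dart B) ys c) x < cnt (attach G xs (dart A) (dart B) ys c)"
    and "cnxt (attach G xs (dart A) (dart B) ys c) x < cnt (attach G xs (dart A) (dart B) ys c)"
proof -
  let ?N = "cnt c" and ?K = "gsize G"
  have "valid_port ?K (glink G Lft)" "valid_port ?K (glink G Rgt)"
    "?N \<le> x \<Longrightarrow> valid_port ?K (glink G (New (x - ?N)))"
    "?N \<le> x \<Longrightarrow> grot G (x - ?N) < ?K"
    using G x by (auto simp: gadget_ok_def attach_fields image_subset_iff)
  moreover have "dart A < ?N" "dart B < ?N" using c st by (auto simp: wf_cfg_def)
  ultimately show "copp (attach G xs (dart A) (dart B) ys c) x < cnt (attach G xs (dart A) (dart B) ys c)"
    and "cnxt (attach G xs (dart A) (dart B) ys c) x < cnt (attach G xs (dart A) (dart B) ys c)"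
    using wf_cfgD(4,5)[OF c, of x] x by (auto simp: attach_fields intro!: port_dart_less)
qed

lemma attach_fixes_open:
  assumes c: "wf_cfg c" and st: "strs c = xs @ A # B # ys" and G: "gadget_ok G"
    and x: "x \<in> dart ` set (strs (attach G xs (dart A) (dart B) ys c))
            \<or> cnt (attach G xs (dart A) (dart B) ys c) \<le> x"
  shows "copp (attach G xs (dart A) (dart B) ys c) x = x"
proof -
  let ?N = "cnt c" and ?K = "gsize G"
  have AB: "dart A < ?N" "dart B < ?N" using c st by (auto simp: wf_cfg_def)
  consider (kept) "x \<in> dart ` (set xs \<union> set ys)" | (out) "x \<in> (+) ?N ` dart ` set (gouts G)"
    | (beyond) "?N + ?K \<le> x"
    using x unfolding dart_image_attach attach_fields(2) by blast
  then show ?thesis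
  proof cases
    case kept
    moreover have "dart A \<notin> dart ` (set xs \<union> set ys)" "dart B \<notin> dart ` (set xs \<union> set ys)"
      using wf_cfgD(1)[OF c] st by (simp_all add: image_Un)
    moreover have "dart ` (set xs \<union> set ys) \<subseteq> {..<?N}" "\<forall>x\<in>dart ` (set xs \<union> set ys). copp c x = x"
      using c st by (auto simp: wf_cfg_def)
    ultimately have "x \<noteq> dart A" "x \<noteq> dart B" "x < ?N" "copp c x = x" by blast+
    then show ?thesis by (simp add: attach_fields)
  next
    case out
    then obtain i where "i \<in> dart ` set (gouts G)" "x = ?N + i" by blast
    moreover from this(1) have "i < ?K" "glink G (New i) = New i" using G by (auto simp: gadget_ok_def)
    ultimately show ?thesis using AB by (simp add: attach_fields)
  next
    case beyond
    then show ?thesis using AB wf_cfgD(6)[OF c] by (simp add: attach_fields)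
  qed
qed

lemma wf_cfg_attach:
  assumes c: "wf_cfg c" and st: "strs c = xs @ A # B # ys" and G: "gadget_ok G"
  shows "wf_cfg (attach G xs (dart A) (dart B) ys c)"
proof (rule wf_cfgI)
  have "dart ` (set xs \<union> set ys) \<subseteq> {..<cnt c}" "state ` (set xs \<union> set ys) \<subseteq> {-1, 0, 1}"
    using c st by (auto simp: wf_cfg_def)
  moreover have "dart ` set (gouts G) \<subseteq> {..<gsize G}" "state ` set (gouts G) \<subseteq> {-1, 0, 1}"
    using G by (simp_all add: gadget_ok_def)
  ultimately show "dart ` set (strs (attach G xs (dart A) (dart B) ys c))
      \<subseteq> {..<cnt (attach G xs (dart A) (dart B) ys c)}"
    and "state ` set (strs (attach G xs (dart A) (dart B) ys c)) \<subseteq> {-1, 0, 1}"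
    by (auto simp: dart_image_attach state_image_attach attach_fields(2))
qed (use distinct_darts_attach[OF assms] attach_closed[OF assms] attach_fixes_open[OF assms] in blast)+

lemma replacement_gadget_ok:
  assumes "replacement A B = Some G"
  shows "gadget_ok G"
proof -
  obtain s j d s' j' d' where "A = (s, j, d)" "B = (s', j', d')" by (cases A, cases B) auto
  then show ?thesis
    using assms by (auto simp: replacement_eq_Some_iff intro: cup_gadget_ok Y_gadget_ok H_gadget_ok)
qed

lemma wf_cfg_gstep:
  assumes "gstep c c'" "wf_cfg c"
  shows "wf_cfg c'"
proof -
  obtain xs A B ys G where "strs c = xs @ A # B # ys" "replacement A B = Some G"
    "c' = attach G xs (dart A) (dart B) ys c"
    using gstep_attachE[OF assms] by blast
  then show ?thesis using assms(2) wf_cfg_attach replacement_gadget_ok by blast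
qed

lemma wf_cfg_gsteps: "gstep\<^sup>*\<^sup>* c c' \<Longrightarrow> wf_cfg c \<Longrightarrow> wf_cfg c'"
  by (induction rule: rtranclp_induct) (auto intro: wf_cfg_gstep)

lemma wf_cfg_ginit:
  assumes "length S = length J" "set J \<subseteq> {-1, 0, 1}"
  shows "wf_cfg (ginit S J)"
proof -
  have "map dart (zip S (zip J [0..<length S])) = map snd (map snd (zip S (zip J [0..<length S])))"
    by (simp add: dart_def)
  then have "map dart (zip S (zip J [0..<length S])) = [0..<length S]"
    using assms(1) by simp
  moreover have "\<forall>e\<in>set (zip S (zip J [0..<length S])). state e \<in> set J \<and> dart e < length S"
    by (auto simp: state_def dart_def set_zip)
  ultimately show ?thesis
    using assms(2) by (auto simp: wf_cfg_def ginit_def simp flip: image_set)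
qed

section \<open>Termination\<close>

fun weight :: "nat \<Rightarrow> strand list \<Rightarrow> int" where
  "weight k [] = 0"
| "weight k (e # es) = int k * state e + weight (Suc k) es"

lemma weight_append: "weight k (xs @ ys) = weight k xs + weight (k + length xs) ys"
  by (induction xs arbitrary: k) auto

lemma weight_map_dart [simp]: "weight k (map (map_dart f) es) = weight k es"
  by (induction es arbitrary: k) auto

lemma weight_le:
  assumes "\<forall>e\<in>set es. state e \<le> 1"
  shows "weight k es \<le> int (length es) * (int k + int (length es))"
  using assms
proof (induction es arbitrary: k)
  case (Cons e es)
  let ?n = "int (length es)"
  have "int k * state e \<le> int k" using Cons.prems by (simp add: mult_left_le)
  moreover have "weight (Suc k) es \<le> ?n * (1 + int k + ?n)"
    using Cons.IH[of "Suc k"] Cons.prems by simp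
  ultimately show ?case by (simp add: algebra_simps)
qed simp

lemma replacement_length_weight:
  assumes "replacement A B = Some G"
  shows "length (gouts G) < 2 \<or> length (gouts G) = 2 \<and> weight k (gouts G) = weight k [A, B] + 1"
proof -
  obtain s j d s' j' d' where "A = (s, j, d)" "B = (s', j', d')" by (cases A, cases B) auto
  then show ?thesis
    using assms by (auto simp: replacement_eq_Some_iff algebra_simps)
qed

definition gstep_measure :: "(cfg \<times> cfg) set" where
  "gstep_measure = measures [\<lambda>c. length (strs c),
     \<lambda>c. nat (int (length (strs c) * length (strs c)) - weight 0 (strs c))]"

lemma gstep_decreases_measure:
  assumes "gstep c c'" "wf_cfg c"
  shows "(c', c) \<in> gstep_measure"
proof -
  obtain xs A B ys G where st: "strs c = xs @ A # B # ys" and G: "replacement A B = Some G"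
    and c': "c' = attach G xs (dart A) (dart B) ys c"
    using gstep_attachE[OF assms] by blast
  let ?L = "length (strs c)"
  consider "length (gouts G) < 2"
    | "length (gouts G) = 2" "weight (length xs) (gouts G) = weight (length xs) [A, B] + 1"
    using replacement_length_weight[OF G] by blast
  then show ?thesis
  proof cases
    case 1
    then show ?thesis using st c' by (simp add: gstep_measure_def attach_fields)
  next
    case 2
    have len: "length (strs c') = ?L" using 2 st c' by (simp add: attach_fields)
    have "weight 0 (strs c') = weight 0 (strs c) + 1"
      using 2 st c' by (simp add: attach_fields weight_append)
    moreover have "\<forall>e\<in>set (strs c'). state e \<le> 1"
      using wf_cfgD(3)[OF wf_cfg_gstep[OF assms]] by fastforce
    then have "weight 0 (strs c') \<le> int (?L * ?L)"
      using weight_le[of "strs c'" 0] len by simp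
    ultimately show ?thesis using len by (simp add: gstep_measure_def)
  qed
qed

lemma wf_gstep: "wf {(c', c). wf_cfg c \<and> gstep c c'}"
proof (rule wf_subset)
  show "wf gstep_measure" by (simp add: gstep_measure_def)
  show "{(c', c). wf_cfg c \<and> gstep c c'} \<subseteq> gstep_measure" using gstep_decreases_measure by blast
qed

section \<open>Isomorphism of configurations\<close>

definition iso_at :: "(nat \<Rightarrow> nat) \<Rightarrow> cfg \<Rightarrow> cfg \<Rightarrow> nat \<Rightarrow> bool" where
  "iso_at f c1 c2 x \<longleftrightarrow> f (copp c1 x) = copp c2 (f x) \<and> f (cnxt c1 x) = cnxt c2 (f x)
     \<and> cout c2 (f x) = cout c1 x \<and> clab c2 (f x) = clab c1 x"

definition cfg_iso_by :: "(nat \<Rightarrow> nat) \<Rightarrow> cfg \<Rightarrow> cfg \<Rightarrow> bool" where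
  "cfg_iso_by f c1 c2 \<longleftrightarrow> bij_betw f {..<cnt c1} {..<cnt c2} \<and> (\<forall>x<cnt c1. iso_at f c1 c2 x)
     \<and> strs c2 = map (map_dart f) (strs c1)"

definition cfg_iso :: "cfg \<Rightarrow> cfg \<Rightarrow> bool" where
  "cfg_iso c1 c2 \<longleftrightarrow> (\<exists>f. cfg_iso_by f c1 c2)"

lemma map_dart_id [simp]: "map_dart id = id"
  by (simp add: map_dart_def dart_def state_def fun_eq_iff)

lemma map_dart_comp [simp]: "map_dart g (map_dart f e) = map_dart (g \<circ> f) e"
  by (simp add: map_dart_def dart_def state_def)

lemma map_map_dart_cong:
  "(\<And>e. e \<in> set es \<Longrightarrow> f (dart e) = g (dart e)) \<Longrightarrow> map (map_dart f) es = map (map_dart g) es"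
  by (simp add: map_dart_def)

lemma map_map_dart_strands:
  assumes "wf_cfg c" "set es \<subseteq> set (strs c)" "\<And>x. x < cnt c \<Longrightarrow> f x = g x"
  shows "map (map_dart f) es = map (map_dart g) es"
proof (rule map_map_dart_cong)
  fix e assume "e \<in> set es"
  then show "f (dart e) = g (dart e)" using assms wf_cfgD(2) by blast
qed

lemma map_map_dart_shift:
  assumes "dart ` set es \<subseteq> {..<K}" "\<And>i. i < K \<Longrightarrow> f (N + i) = M + i"
  shows "map (map_dart f) (map (map_dart ((+) N)) es) = map (map_dart ((+) M)) es"
proof -
  have "map (map_dart f) (map (map_dart ((+) N)) es) = map (map_dart (f \<circ> (+) N)) es" by simp
  also have "\<dots> = map (map_dart ((+) M)) es"
  proof (rule map_map_dart_cong)
    fix e assume "e \<in> set es"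
    then show "(f \<circ> (+) N) (dart e) = M + dart e" using assms by auto
  qed
  finally show ?thesis .
qed

lemma cfg_iso_refl: "cfg_iso c c"
  unfolding cfg_iso_def cfg_iso_by_def iso_at_def by (rule exI[of _ id]) simp

lemma cfg_iso_trans:
  assumes "cfg_iso c1 c2" "cfg_iso c2 c3"
  shows "cfg_iso c1 c3"
proof -
  obtain f g where f: "cfg_iso_by f c1 c2" and g: "cfg_iso_by g c2 c3"
    using assms by (auto simp: cfg_iso_def)
  have "f x < cnt c2" if "x < cnt c1" for x
    using f that by (auto simp: cfg_iso_by_def bij_betw_def)
  then have "cfg_iso_by (g \<circ> f) c1 c3"
    using f g by (auto simp: cfg_iso_by_def iso_at_def intro: bij_betw_trans)
  then show ?thesis by (auto simp: cfg_iso_def)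
qed

lemma cfg_iso_by_hom:
  assumes "cfg_iso_by f c1 c2" "x < cnt c1"
  shows "f (copp c1 x) = copp c2 (f x)" "f (cnxt c1 x) = cnxt c2 (f x)"
    "cout c2 (f x) = cout c1 x" "clab c2 (f x) = clab c1 x"
  using assms by (simp_all add: cfg_iso_by_def iso_at_def)

lemma cfg_iso_sym:
  assumes c1: "wf_cfg c1" and iso: "cfg_iso c1 c2"
  shows "cfg_iso c2 c1"
proof -
  obtain f where f: "cfg_iso_by f c1 c2" using iso by (auto simp: cfg_iso_def)
  let ?g = "the_inv_into {..<cnt c1} f"
  have bij: "bij_betw f {..<cnt c1} {..<cnt c2}" using f by (simp add: cfg_iso_by_def)
  then have bij_g: "bij_betw ?g {..<cnt c2} {..<cnt c1}" by (rule bij_betw_the_inv_into)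
  have gf: "?g (f x) = x" if "x < cnt c1" for x
    using bij that by (simp add: bij_betw_def the_inv_into_f_f)
  have "?g (copp c2 y) = copp c1 (?g y) \<and> ?g (cnxt c2 y) = cnxt c1 (?g y)
        \<and> cout c1 (?g y) = cout c2 y \<and> clab c1 (?g y) = clab c2 y" if "y < cnt c2" for y
  proof -
    have "y \<in> f ` {..<cnt c1}" using bij that by (simp add: bij_betw_def)
    then obtain x where x: "x < cnt c1" "y = f x" by blast
    then show ?thesis
      using cfg_iso_by_hom[OF f x(1)] gf[OF x(1)] gf[OF wf_cfgD(4)[OF c1 x(1)]]
        gf[OF wf_cfgD(5)[OF c1 x(1)]]
      by simp
  qed
  moreover have "strs c1 = map (map_dart ?g) (strs c2)"
  proof -
    have "map (map_dart ?g) (strs c2) = map (map_dart (?g \<circ> f)) (strs c1)"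
      using f by (simp add: cfg_iso_by_def)
    also have "\<dots> = map (map_dart id) (strs c1)"
      using gf wf_cfgD(2)[OF c1] by (intro map_map_dart_cong) simp
    finally show ?thesis by simp
  qed
  ultimately show ?thesis using bij_g by (auto simp: cfg_iso_def cfg_iso_by_def iso_at_def)
qed

definition extend_above :: "nat \<Rightarrow> nat \<Rightarrow> (nat \<Rightarrow> nat) \<Rightarrow> nat \<Rightarrow> nat" where
  "extend_above N1 N2 f x = (if x < N1 then f x else x - N1 + N2)"

lemma bij_betw_extend_above:
  assumes "bij_betw f {..<N1} {..<N2}"
  shows "bij_betw (extend_above N1 N2 f) {..<N1 + K} {..<N2 + K}"
proof -
  have "bij_betw (\<lambda>x. x - N1 + N2) {N1..<N1 + K} {N2..<N2 + K}"
    by (rule bij_betw_byWitness[where f' = "\<lambda>y. y - N2 + N1"]) auto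
  then have "bij_betw (\<lambda>x. if x \<in> {..<N1} then f x else x - N1 + N2)
               ({..<N1} \<union> {N1..<N1 + K}) ({..<N2} \<union> {N2..<N2 + K})"
    using assms by (intro bij_betw_disjoint_Un) auto
  moreover have "{..<N1} \<union> {N1..<N1 + K} = {..<N1 + K}" "{..<N2} \<union> {N2..<N2 + K} = {..<N2 + K}"
    by auto
  ultimately show ?thesis by (simp add: extend_above_def [abs_def])
qed

lemma port_dart_extend_above:
  "valid_port K p \<Longrightarrow> d < N1 \<Longrightarrow> d' < N1 \<Longrightarrow>
     extend_above N1 N2 f (port_dart N1 d d' p) = port_dart N2 (f d) (f d') p"
  by (cases p) (auto simp: extend_above_def)

context
  fixes f :: "nat \<Rightarrow> nat" and c1 c2 :: cfg and xs ys :: "strand list" and A B :: strand and G :: gadget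
  assumes c1: "wf_cfg c1" and iso: "cfg_iso_by f c1 c2" and st: "strs c1 = xs @ A # B # ys"
    and G: "gadget_ok G"
begin

abbreviation (input) attach_src :: cfg where
  "attach_src \<equiv> attach G xs (dart A) (dart B) ys c1"

abbreviation (input) attach_tgt :: cfg where
  "attach_tgt \<equiv> attach G (map (map_dart f) xs) (f (dart A)) (f (dart B)) (map (map_dart f) ys) c2"

lemma iso_at_attach:
  assumes x: "x < cnt c1 + gsize G"
  shows "iso_at (extend_above (cnt c1) (cnt c2) f) attach_src attach_tgt x"
proof -
  let ?N1 = "cnt c1" and ?N2 = "cnt c2" and ?K = "gsize G" and ?F = "extend_above (cnt c1) (cnt c2) f"
  have bij: "bij_betw f {..<?N1} {..<?N2}" using iso by (simp add: cfg_iso_by_def)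
  have f_less: "f x < ?N2" if "x < ?N1" for x using bij that by (auto simp: bij_betw_def)
  have f_eq: "f x = f y \<longleftrightarrow> x = y" if "x < ?N1" "y < ?N1" for x y
    using bij that by (auto simp: bij_betw_def inj_on_def)
  have AB: "dart A < ?N1" "dart B < ?N1" "dart A \<noteq> dart B"
    using c1 st by (auto simp: wf_cfg_def)
  have fAB: "f (dart A) < ?N2" "f (dart B) < ?N2" "f (dart A) \<noteq> f (dart B)"
    using AB f_less f_eq by auto
  have valid: "valid_port ?K p \<Longrightarrow> valid_port ?K (glink G p)" "i < ?K \<Longrightarrow> grot G i < ?K" for p i
    using G by (auto simp: gadget_ok_def)
  note ports = port_dart_extend_above[OF valid(1) AB(1,2)]
  show ?thesis
  proof (cases "x < ?N1")
    case True
    have Fx: "?F x = f x" "f x < ?N2" using True f_less by (simp_all add: extend_above_def)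
    have closed: "?F (copp c1 x) = f (copp c1 x)" "?F (cnxt c1 x) = f (cnxt c1 x)"
      using wf_cfgD(4,5)[OF c1 True] by (simp_all add: extend_above_def)
    consider "x = dart A" | "x \<noteq> dart A" "x = dart B" | "x \<noteq> dart A" "x \<noteq> dart B" by blast
    then show ?thesis
      by cases (use True Fx closed fAB f_eq[OF True AB(1)] f_eq[OF True AB(2)] cfg_iso_by_hom[OF iso True]
                in \<open>simp_all add: iso_at_def attach_at_old ports\<close>)
  next
    case False
    then obtain i where i: "i < ?K" "x = ?N1 + i" using x by (metis add_diff_inverse_nat add_less_cancel_left)
    have "?F (?N1 + i) = ?N2 + i" "?F (?N1 + grot G i) = ?N2 + grot G i"
      by (simp_all add: extend_above_def)
    then show ?thesis
      using i AB fAB valid(2)[OF i(1)]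
      by (simp add: iso_at_def attach_at_new attach_fields(2) ports valid(1))
  qed
qed

lemma strs_attach_iso: "strs attach_tgt = map (map_dart (extend_above (cnt c1) (cnt c2) f)) (strs attach_src)"
proof -
  let ?F = "extend_above (cnt c1) (cnt c2) f"
  have "map (map_dart ?F) es = map (map_dart f) es" if "set es \<subseteq> set (strs c1)" for es
    by (rule map_map_dart_strands[OF c1 that]) (simp add: extend_above_def)
  then have "map (map_dart ?F) xs = map (map_dart f) xs" "map (map_dart ?F) ys = map (map_dart f) ys"
    using st by auto
  moreover have "map (map_dart ?F) (map (map_dart ((+) (cnt c1))) (gouts G))
      = map (map_dart ((+) (cnt c2))) (gouts G)"
    using G by (intro map_map_dart_shift[where K = "gsize G"]) (auto simp: gadget_ok_def extend_above_def)
  ultimately show ?thesis by (simp add: attach_fields)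
qed

lemma cfg_iso_by_attach: "cfg_iso_by (extend_above (cnt c1) (cnt c2) f) attach_src attach_tgt"
proof -
  have "bij_betw f {..<cnt c1} {..<cnt c2}" using iso by (simp add: cfg_iso_by_def)
  then show ?thesis
    using bij_betw_extend_above iso_at_attach strs_attach_iso by (simp add: cfg_iso_by_def attach_fields)
qed

end

lemma replacement_map_dart [simp]: "replacement (map_dart f A) (map_dart g B) = replacement A B"
  by (cases A, cases B) (simp add: replacement.simps)

lemma gstep_cfg_iso:
  assumes c1: "wf_cfg c1" and c2: "wf_cfg c2" and iso: "cfg_iso c1 c2" and step: "gstep c1 c1'"
  shows "\<exists>c2'. gstep c2 c2' \<and> cfg_iso c1' c2'"
proof -
  obtain xs A B ys G where st: "strs c1 = xs @ A # B # ys" and G: "replacement A B = Some G"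
    and c1': "c1' = attach G xs (dart A) (dart B) ys c1"
    using gstep_attachE[OF step c1] by blast
  obtain f where f: "cfg_iso_by f c1 c2" using iso by (auto simp: cfg_iso_def)
  have "strs c2 = map (map_dart f) xs @ map_dart f A # map_dart f B # map (map_dart f) ys"
    using f st by (simp add: cfg_iso_by_def)
  from gstep_attachI[OF c2 this] G
  have "gstep c2 (attach G (map (map_dart f) xs) (f (dart A)) (f (dart B)) (map (map_dart f) ys) c2)"
    by simp
  moreover have "cfg_iso c1' (attach G (map (map_dart f) xs) (f (dart A)) (f (dart B)) (map (map_dart f) ys) c2)"
    using cfg_iso_by_attach[OF c1 f st replacement_gadget_ok[OF G]] c1' by (auto simp: cfg_iso_def)
  ultimately show ?thesis by blast
qed

section \<open>Local confluence\<close>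

definition swap_blocks :: "nat \<Rightarrow> nat \<Rightarrow> nat \<Rightarrow> nat \<Rightarrow> nat" where
  "swap_blocks N K1 K2 x = (if x < N then x else if x < N + K1 then x + K2 else x - K1)"

lemma bij_swap_blocks: "bij_betw (swap_blocks N K1 K2) {..<N + K1 + K2} {..<N + K2 + K1}"
  by (rule bij_betw_byWitness[where f' = "swap_blocks N K2 K1"]) (auto simp: swap_blocks_def)

lemma swap_blocks_port_dart:
  assumes "d < N" "d' < N"
  shows "valid_port K1 p \<Longrightarrow> swap_blocks N K1 K2 (port_dart N d d' p) = port_dart (N + K2) d d' p"
    and "valid_port K2 p \<Longrightarrow> swap_blocks N K1 K2 (port_dart (N + K1) d d' p) = port_dart N d d' p"
  using assms by (cases p; auto simp: swap_blocks_def)+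

context
  fixes c :: cfg and xs zs ys :: "strand list" and A B C D :: strand and G1 G2 :: gadget
  assumes c: "wf_cfg c" and st: "strs c = xs @ A # B # zs @ C # D # ys"
    and G1: "gadget_ok G1" and G2: "gadget_ok G2"
begin

abbreviation (input) attach_left_first :: cfg where
  "attach_left_first \<equiv> attach G2 (xs @ map (map_dart ((+) (cnt c))) (gouts G1) @ zs) (dart C) (dart D) ys
     (attach G1 xs (dart A) (dart B) (zs @ C # D # ys) c)"

abbreviation (input) attach_right_first :: cfg where
  "attach_right_first \<equiv> attach G1 xs (dart A) (dart B) (zs @ map (map_dart ((+) (cnt c))) (gouts G2) @ ys)
     (attach G2 (xs @ A # B # zs) (dart C) (dart D) ys c)"

lemma iso_at_attach_commute:
  assumes x: "x < cnt c + gsize G1 + gsize G2"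
  shows "iso_at (swap_blocks (cnt c) (gsize G1) (gsize G2)) attach_left_first attach_right_first x"
proof -
  let ?f = "swap_blocks (cnt c) (gsize G1) (gsize G2)" and ?N = "cnt c" and ?K1 = "gsize G1"
    and ?K2 = "gsize G2"
  have darts: "dart A < ?N" "dart B < ?N" "dart C < ?N" "dart D < ?N"
    "distinct [dart A, dart B, dart C, dart D]"
    using c st by (auto simp: wf_cfg_def)
  have valid1: "valid_port ?K1 p \<Longrightarrow> valid_port ?K1 (glink G1 p)" "i < ?K1 \<Longrightarrow> grot G1 i < ?K1" for p i
    using G1 by (auto simp: gadget_ok_def)
  have valid2: "valid_port ?K2 p \<Longrightarrow> valid_port ?K2 (glink G2 p)" "i < ?K2 \<Longrightarrow> grot G2 i < ?K2" for p i
    using G2 by (auto simp: gadget_ok_def)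
  note ports = swap_blocks_port_dart(1)[OF darts(1,2) valid1(1)]
    swap_blocks_port_dart(2)[OF darts(3,4) valid2(1)]
  note at = attach_at_old attach_at_new attach_fields(2)
  consider "x < ?N" | i where "i < ?K1" "x = ?N + i" | i where "i < ?K2" "x = ?N + ?K1 + i"
    using x by (metis add_diff_inverse_nat add_less_cancel_left not_less)
  then show ?thesis
  proof cases
    case 1
    have fx: "?f x = x" "?f (copp c x) = copp c x" "?f (cnxt c x) = cnxt c x"
      using 1 wf_cfgD(4,5)[OF c 1] by (simp_all add: swap_blocks_def)
    consider "x = dart A" | "x = dart B" | "x = dart C" | "x = dart D"
      | "x \<noteq> dart A" "x \<noteq> dart B" "x \<noteq> dart C" "x \<noteq> dart D" by blast
    then show ?thesis
      by cases (use 1 fx darts in \<open>simp_all add: iso_at_def at ports\<close>)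
  next
    case (2 i)
    have "?f (?N + i) = ?N + ?K2 + i" "?f (?N + grot G1 i) = ?N + ?K2 + grot G1 i"
      using valid1(2)[OF 2(1)] 2(1) by (simp_all add: swap_blocks_def)
    then show ?thesis using 2 darts by (simp add: iso_at_def at ports valid1)
  next
    case (3 i)
    have "?f (?N + ?K1 + i) = ?N + i" "?f (?N + ?K1 + grot G2 i) = ?N + grot G2 i"
      using valid2(2)[OF 3(1)] 3(1) by (simp_all add: swap_blocks_def)
    then show ?thesis using 3 darts by (simp add: iso_at_def at ports valid2)
  qed
qed

lemma strs_attach_commute:
  "strs attach_right_first = map (map_dart (swap_blocks (cnt c) (gsize G1) (gsize G2))) (strs attach_left_first)"
proof -
  let ?f = "swap_blocks (cnt c) (gsize G1) (gsize G2)"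
  have "map (map_dart ?f) es = map (map_dart id) es" if "set es \<subseteq> set (strs c)" for es
    by (rule map_map_dart_strands[OF c that]) (simp add: swap_blocks_def)
  then have "map (map_dart ?f) xs = xs" "map (map_dart ?f) zs = zs" "map (map_dart ?f) ys = ys"
    using st by auto
  moreover have "map (map_dart ?f) (map (map_dart ((+) (cnt c))) (gouts G1))
      = map (map_dart ((+) (cnt c + gsize G2))) (gouts G1)"
    using G1 by (intro map_map_dart_shift[where K = "gsize G1"]) (auto simp: gadget_ok_def swap_blocks_def)
  moreover have "map (map_dart ?f) (map (map_dart ((+) (cnt c + gsize G1))) (gouts G2))
      = map (map_dart ((+) (cnt c))) (gouts G2)"
    using G2 by (intro map_map_dart_shift[where K = "gsize G2"]) (auto simp: gadget_ok_def swap_blocks_def)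
  ultimately show ?thesis by (simp add: attach_fields)
qed

lemma attach_commute:
  "cfg_iso_by (swap_blocks (cnt c) (gsize G1) (gsize G2)) attach_left_first attach_right_first"
  using bij_swap_blocks iso_at_attach_commute strs_attach_commute
  by (simp add: cfg_iso_by_def attach_fields)

end

definition joinable :: "cfg \<Rightarrow> cfg \<Rightarrow> bool" where
  "joinable a b \<longleftrightarrow> (\<exists>a' b'. gstep\<^sup>*\<^sup>* a a' \<and> gstep\<^sup>*\<^sup>* b b' \<and> cfg_iso a' b')"

definition perm_above :: "nat \<Rightarrow> nat list \<Rightarrow> nat \<Rightarrow> nat" where
  "perm_above N tab x = (if x < N then x else N + tab ! (x - N))"

lemma bij_perm_above:
  assumes "distinct tab" "set tab \<subseteq> {..<length tab}"
  shows "bij_betw (perm_above N tab) {..<N + length tab} {..<N + length tab}"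
proof -
  let ?A = "{..<N + length tab}"
  have "perm_above N tab x \<in> ?A" if "x \<in> ?A" for x
  proof (cases "x < N")
    case False
    then have "tab ! (x - N) \<in> set tab" using that by auto
    then show ?thesis using assms(2) False by (auto simp: perm_above_def)
  qed (simp add: perm_above_def)
  moreover have "inj_on (perm_above N tab) ?A"
    using assms(1) by (auto simp: inj_on_def perm_above_def nth_eq_iff_index_eq split: if_splits)
  ultimately show ?thesis
    using endo_inj_surj[of ?A "perm_above N tab"] by (auto simp: bij_betw_def)
qed

lemma cfg_iso_by_perm_aboveI:
  assumes "cnt a = N + length tab" "cnt b = N + length tab"
    and "distinct tab" "set tab \<subseteq> {..<length tab}"
    and "\<And>x. x < N \<Longrightarrow> iso_at (perm_above N tab) a b x"
    and "list_all (\<lambda>k. iso_at (perm_above N tab) a b (N + k)) [0..<length tab]"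
    and "strs b = map (map_dart (perm_above N tab)) (strs a)"
  shows "cfg_iso_by (perm_above N tab) a b"
proof -
  have "iso_at (perm_above N tab) a b x" if "x < N + length tab" for x
  proof (cases "x < N")
    case False
    then show ?thesis using assms(6) that by (auto simp: list_all_iff dest: bspec[of _ _ "x - N"])
  qed (rule assms(5))
  then show ?thesis using assms bij_perm_above by (simp add: cfg_iso_by_def)
qed

lemma map_dart_perm_above_strands:
  assumes "wf_cfg c" "set es \<subseteq> set (strs c)"
  shows "map (map_dart (perm_above (cnt c) tab)) es = es"
proof -
  have "map (map_dart (perm_above (cnt c) tab)) es = map (map_dart id) es"
    by (rule map_map_dart_strands[OF assms]) (simp add: perm_above_def)
  then show ?thesis by simp
qed

lemma joinableI:
  "gstep a a' \<Longrightarrow> gstep b b' \<Longrightarrow> cfg_iso_by f a' b' \<Longrightarrow> joinable a b"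
  unfolding joinable_def cfg_iso_def by blast

lemma joinable_YY:
  assumes c: "wf_cfg c" and st: "strs c = xs @ (s, 1, d1) # (s, 0, d2) # (s, -1, d3) # ys"
  shows "joinable (attach (Y_gadget s 1) xs d1 d2 ((s, -1, d3) # ys) c)
    (attach (Y_gadget s (-1)) (xs @ [(s, 1, d1)]) d2 d3 ys c)"
    (is "joinable ?a ?b")
proof -
  let ?N = "cnt c"
  have d: "d1 < ?N" "d2 < ?N" "d3 < ?N" "distinct [d1, d2, d3]"
    using c st by (auto simp: wf_cfg_def)
  have keep: "map (map_dart (perm_above ?N tab)) xs = xs"
    "map (map_dart (perm_above ?N tab)) ys = ys" for tab
    using map_dart_perm_above_strands[OF c] st by auto
  have ca: "gstep c ?a"
    using gstep_attachI[OF c st] by (auto simp: replacement.simps)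
  have cb: "gstep c ?b"
    using gstep_attachI[OF c, of "xs @ [(s, 1, d1)]" "(s, 0, d2)" "(s, -1, d3)" ys] st
    by (auto simp: replacement.simps)
  let ?a' = "attach cup_gadget xs (?N + 2) d3 ys ?a"
  let ?b' = "attach cup_gadget xs d1 (?N + 2) ys ?b"
  have "gstep ?a ?a'"
    using gstep_attachI[OF wf_cfg_gstep[OF ca c],
        of xs "(\<not> s, 1, ?N + 2)" "(s, -1, d3)" ys]
    by (auto simp: attach_fields replacement.simps)
  moreover have "gstep ?b ?b'"
    using gstep_attachI[OF wf_cfg_gstep[OF cb c],
        of xs "(s, 1, d1)" "(\<not> s, -1, ?N + 2)" ys]
    by (auto simp: attach_fields replacement.simps)
  moreover have "cfg_iso_by (perm_above ?N [2, 0, 1]) ?a' ?b'"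
  proof (rule cfg_iso_by_perm_aboveI)
    show "iso_at (perm_above ?N [2, 0, 1]) ?a' ?b' x" if x: "x < ?N" for x
    proof -
      consider "x = d1" | "x = d2" | "x = d3" | "x \<noteq> d1" "x \<noteq> d2" "x \<noteq> d3" by blast
      then show ?thesis
        by cases (use x d wf_cfgD(4,5)[OF c x] in
                  \<open>simp_all add: iso_at_def attach_at_old attach_fields(2) perm_above_def\<close>)
    qed
    show "list_all (\<lambda>k. iso_at (perm_above ?N [2, 0, 1]) ?a' ?b' (?N + k)) [0..<length [2, 0, 1]]"
      using d by (simp add: iso_at_def attach_at_old attach_at_new attach_fields(2) perm_above_def
          wf_cfgD(6)[OF c] upt_rec)
    show "strs ?b' = map (map_dart (perm_above ?N [2, 0, 1])) (strs ?a')"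
      using d keep by (simp add: attach_fields perm_above_def)
  qed (simp_all add: attach_fields)
  ultimately show ?thesis by (rule joinableI)
qed

lemma joinable_YH:
  assumes c: "wf_cfg c" and st: "strs c = xs @ (s, 1, d1) # (s, 0, d2) # (\<not> s, j3, d3) # ys"
    and j3: "j3 \<in> {-1, 0}"
  shows "joinable (attach (Y_gadget s 1) xs d1 d2 ((\<not> s, j3, d3) # ys) c)
    (attach (H_gadget s (\<not> s) (-1) (j3 + 1)) (xs @ [(s, 1, d1)]) d2 d3 ys c)"
    (is "joinable ?a ?b")
proof -
  let ?N = "cnt c"
  have d: "d1 < ?N" "d2 < ?N" "d3 < ?N" "distinct [d1, d2, d3]"
    using c st by (auto simp: wf_cfg_def)
  have keep: "map (map_dart (perm_above ?N tab)) xs = xs"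
    "map (map_dart (perm_above ?N tab)) ys = ys" for tab
    using map_dart_perm_above_strands[OF c] st by auto
  have ca: "gstep c ?a"
    using gstep_attachI[OF c st] j3 by (auto simp: replacement.simps)
  have cb: "gstep c ?b"
    using gstep_attachI[OF c,
        of "xs @ [(s, 1, d1)]" "(s, 0, d2)" "(\<not> s, j3, d3)" ys] st j3
    by (auto simp: replacement.simps)
  let ?a' = "attach (Y_gadget (\<not> s) (j3 + 1)) xs (?N + 2) d3 ys ?a"
  let ?b' = "attach cup_gadget xs d1 (?N + 2) ((s, j3 + 1, ?N + 5) # ys) ?b"
  have "gstep ?a ?a'"
    using gstep_attachI[OF wf_cfg_gstep[OF ca c],
        of xs "(\<not> s, 1, ?N + 2)" "(\<not> s, j3, d3)" ys] j3
    by (auto simp: attach_fields replacement.simps)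
  moreover have "gstep ?b ?b'"
    using gstep_attachI[OF wf_cfg_gstep[OF cb c],
        of xs "(s, 1, d1)" "(\<not> s, -1, ?N + 2)" "(s, j3 + 1, ?N + 5) # ys"] j3
    by (auto simp: attach_fields replacement.simps)
  moreover have "cfg_iso_by (perm_above ?N [2, 0, 1, 4, 3, 5]) ?a' ?b'"
  proof (rule cfg_iso_by_perm_aboveI)
    show "iso_at (perm_above ?N [2, 0, 1, 4, 3, 5]) ?a' ?b' x" if x: "x < ?N" for x
    proof -
      consider "x = d1" | "x = d2" | "x = d3" | "x \<noteq> d1" "x \<noteq> d2" "x \<noteq> d3" by blast
      then show ?thesis
        by cases (use x d wf_cfgD(4,5)[OF c x] in
                  \<open>simp_all add: iso_at_def attach_at_old attach_fields(2) perm_above_def\<close>)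
    qed
    show "list_all (\<lambda>k. iso_at (perm_above ?N [2, 0, 1, 4, 3, 5]) ?a' ?b' (?N + k)) [0..<length [2, 0, 1, 4, 3, 5]]"
      using d by (simp add: iso_at_def attach_at_old attach_at_new attach_fields(2) perm_above_def
          wf_cfgD(6)[OF c] upt_rec)
    show "strs ?b' = map (map_dart (perm_above ?N [2, 0, 1, 4, 3, 5])) (strs ?a')"
      using d keep by (simp add: attach_fields perm_above_def)
  qed (simp_all add: attach_fields)
  ultimately show ?thesis by (rule joinableI)
qed

lemma joinable_HH:
  assumes c: "wf_cfg c" and st: "strs c = xs @ (s, j1, d1) # (\<not> s, 0, d2) # (s, j3, d3) # ys"
    and j1: "j1 \<in> {0, 1}" and j3: "j3 \<in> {-1, 0}"
  shows "joinable (attach (H_gadget s (\<not> s) (j1 - 1) 1) xs d1 d2 ((s, j3, d3) # ys) c)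
    (attach (H_gadget (\<not> s) s (-1) (j3 + 1)) (xs @ [(s, j1, d1)]) d2 d3 ys c)"
    (is "joinable ?a ?b")
proof -
  let ?N = "cnt c"
  have d: "d1 < ?N" "d2 < ?N" "d3 < ?N" "distinct [d1, d2, d3]"
    using c st by (auto simp: wf_cfg_def)
  have keep: "map (map_dart (perm_above ?N tab)) xs = xs"
    "map (map_dart (perm_above ?N tab)) ys = ys" for tab
    using map_dart_perm_above_strands[OF c] st by auto
  have ca: "gstep c ?a"
    using gstep_attachI[OF c st] j1 j3 by (auto simp: replacement.simps)
  have cb: "gstep c ?b"
    using gstep_attachI[OF c,
        of "xs @ [(s, j1, d1)]" "(\<not> s, 0, d2)" "(s, j3, d3)" ys] st j1 j3
    by (auto simp: replacement.simps)
  let ?a' = "attach (Y_gadget s (j3 + 1)) (xs @ [(\<not> s, j1 - 1, ?N + 2)]) (?N + 5) d3 ys ?a"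
  let ?b' = "attach (Y_gadget s (j1 - 1)) xs d1 (?N + 2) ((\<not> s, j3 + 1, ?N + 5) # ys) ?b"
  have "gstep ?a ?a'"
    using gstep_attachI[OF wf_cfg_gstep[OF ca c],
        of "xs @ [(\<not> s, j1 - 1, ?N + 2)]" "(s, 1, ?N + 5)" "(s, j3, d3)" ys] j1 j3
    by (auto simp: attach_fields replacement.simps)
  moreover have "gstep ?b ?b'"
    using gstep_attachI[OF wf_cfg_gstep[OF cb c],
        of xs "(s, j1, d1)" "(s, -1, ?N + 2)" "(\<not> s, j3 + 1, ?N + 5) # ys"] j1 j3
    by (auto simp: attach_fields replacement.simps)
  moreover have "cfg_iso_by (perm_above ?N [6, 7, 8, 0, 2, 1, 4, 3, 5]) ?a' ?b'"
  proof (rule cfg_iso_by_perm_aboveI)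
    show "iso_at (perm_above ?N [6, 7, 8, 0, 2, 1, 4, 3, 5]) ?a' ?b' x" if x: "x < ?N" for x
    proof -
      consider "x = d1" | "x = d2" | "x = d3" | "x \<noteq> d1" "x \<noteq> d2" "x \<noteq> d3" by blast
      then show ?thesis
        by cases (use x d wf_cfgD(4,5)[OF c x] in
                  \<open>simp_all add: iso_at_def attach_at_old attach_fields(2) perm_above_def\<close>)
    qed
    show "list_all (\<lambda>k. iso_at (perm_above ?N [6, 7, 8, 0, 2, 1, 4, 3, 5]) ?a' ?b' (?N + k)) [0..<length [6, 7, 8, 0, 2, 1, 4, 3, 5]]"
      using d by (simp add: iso_at_def attach_at_old attach_at_new attach_fields(2) perm_above_def
          wf_cfgD(6)[OF c] upt_rec)
    show "strs ?b' = map (map_dart (perm_above ?N [6, 7, 8, 0, 2, 1, 4, 3, 5])) (strs ?a')"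
      using d keep by (simp add: attach_fields perm_above_def)
  qed (simp_all add: attach_fields)
  ultimately show ?thesis by (rule joinableI)
qed

lemma joinable_HY:
  assumes c: "wf_cfg c" and st: "strs c = xs @ (s, j1, d1) # (\<not> s, 0, d2) # (\<not> s, -1, d3) # ys"
    and j1: "j1 \<in> {0, 1}"
  shows "joinable (attach (H_gadget s (\<not> s) (j1 - 1) 1) xs d1 d2 ((\<not> s, -1, d3) # ys) c)
    (attach (Y_gadget (\<not> s) (-1)) (xs @ [(s, j1, d1)]) d2 d3 ys c)"
    (is "joinable ?a ?b")
proof -
  let ?N = "cnt c"
  have d: "d1 < ?N" "d2 < ?N" "d3 < ?N" "distinct [d1, d2, d3]"
    using c st by (auto simp: wf_cfg_def)
  have keep: "map (map_dart (perm_above ?N tab)) xs = xs"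
    "map (map_dart (perm_above ?N tab)) ys = ys" for tab
    using map_dart_perm_above_strands[OF c] st by auto
  have ca: "gstep c ?a"
    using gstep_attachI[OF c st] j1 by (auto simp: replacement.simps)
  have cb: "gstep c ?b"
    using gstep_attachI[OF c,
        of "xs @ [(s, j1, d1)]" "(\<not> s, 0, d2)" "(\<not> s, -1, d3)" ys] st j1
    by (auto simp: replacement.simps)
  let ?a' = "attach cup_gadget (xs @ [(\<not> s, j1 - 1, ?N + 2)]) (?N + 5) d3 ys ?a"
  let ?b' = "attach (Y_gadget s (j1 - 1)) xs d1 (?N + 2) ys ?b"
  have "gstep ?a ?a'"
    using gstep_attachI[OF wf_cfg_gstep[OF ca c],
        of "xs @ [(\<not> s, j1 - 1, ?N + 2)]" "(s, 1, ?N + 5)" "(\<not> s, -1, d3)" ys] j1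
    by (auto simp: attach_fields replacement.simps)
  moreover have "gstep ?b ?b'"
    using gstep_attachI[OF wf_cfg_gstep[OF cb c], of xs "(s, j1, d1)" "(s, -1, ?N + 2)" ys] j1
    by (auto simp: attach_fields replacement.simps)
  moreover have "cfg_iso_by (perm_above ?N [3, 4, 5, 0, 2, 1]) ?a' ?b'"
  proof (rule cfg_iso_by_perm_aboveI)
    show "iso_at (perm_above ?N [3, 4, 5, 0, 2, 1]) ?a' ?b' x" if x: "x < ?N" for x
    proof -
      consider "x = d1" | "x = d2" | "x = d3" | "x \<noteq> d1" "x \<noteq> d2" "x \<noteq> d3" by blast
      then show ?thesis
        by cases (use x d wf_cfgD(4,5)[OF c x] in
                  \<open>simp_all add: iso_at_def attach_at_old attach_fields(2) perm_above_def\<close>)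
    qed
    show "list_all (\<lambda>k. iso_at (perm_above ?N [3, 4, 5, 0, 2, 1]) ?a' ?b' (?N + k)) [0..<length [3, 4, 5, 0, 2, 1]]"
      using d by (simp add: iso_at_def attach_at_old attach_at_new attach_fields(2) perm_above_def
          wf_cfgD(6)[OF c] upt_rec)
    show "strs ?b' = map (map_dart (perm_above ?N [3, 4, 5, 0, 2, 1])) (strs ?a')"
      using d keep by (simp add: attach_fields perm_above_def)
  qed (simp_all add: attach_fields)
  ultimately show ?thesis by (rule joinableI)
qed

lemma joinable_overlap:
  assumes c: "wf_cfg c" and st: "strs c = xs @ A # B # C # ys"
    and G1: "replacement A B = Some G1" and G2: "replacement B C = Some G2"
  shows "joinable (attach G1 xs (dart A) (dart B) (C # ys) c)
    (attach G2 (xs @ [A]) (dart B) (dart C) ys c)"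
proof -
  obtain s1 j1 d1 s2 j2 d2 s3 j3 d3 where ABC: "A = (s1, j1, d1)" "B = (s2, j2, d2)" "C = (s3, j3, d3)"
    by (cases A, cases B, cases C) auto
  note r1 = G1[unfolded ABC replacement_eq_Some_iff] and r2 = G2[unfolded ABC replacement_eq_Some_iff]
  have j2: "j2 = 0" using r1 r2 by auto
  have "s2 = (\<not> s1) \<and> j1 \<in> {0, 1} \<and> G1 = H_gadget s1 (\<not> s1) (j1 - 1) 1 \<or> s2 = s1 \<and> j1 = 1 \<and> G1 = Y_gadget s1 1"
    using r1 j2 by auto
  moreover have "s3 = (\<not> s2) \<and> j3 \<in> {-1, 0} \<and> G2 = H_gadget s2 (\<not> s2) (-1) (j3 + 1)
      \<or> s3 = s2 \<and> j3 = -1 \<and> G2 = Y_gadget s2 (-1)"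
    using r2 j2 by auto
  ultimately show ?thesis
  proof (elim disjE conjE)
    assume "s2 = (\<not> s1)" "j1 \<in> {0, 1}" "G1 = H_gadget s1 (\<not> s1) (j1 - 1) 1"
      "s3 = (\<not> s2)" "j3 \<in> {-1, 0}" "G2 = H_gadget s2 (\<not> s2) (-1) (j3 + 1)"
    then show ?thesis using joinable_HH[of c xs s1 j1 d1 d2 j3 d3 ys] c st ABC j2 by simp
  next
    assume "s2 = (\<not> s1)" "j1 \<in> {0, 1}" "G1 = H_gadget s1 (\<not> s1) (j1 - 1) 1"
      "s3 = s2" "j3 = -1" "G2 = Y_gadget s2 (-1)"
    then show ?thesis using joinable_HY[of c xs s1 j1 d1 d2 d3 ys] c st ABC j2 by simp
  next
    assume "s2 = s1" "j1 = 1" "G1 = Y_gadget s1 1"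
      "s3 = (\<not> s2)" "j3 \<in> {-1, 0}" "G2 = H_gadget s2 (\<not> s2) (-1) (j3 + 1)"
    then show ?thesis using joinable_YH[of c xs s1 d1 d2 j3 d3 ys] c st ABC j2 by simp
  next
    assume "s2 = s1" "j1 = 1" "G1 = Y_gadget s1 1" "s3 = s2" "j3 = -1" "G2 = Y_gadget s2 (-1)"
    then show ?thesis using joinable_YY[of c xs s1 d1 d2 d3 ys] c st ABC j2 by simp
  qed
qed

lemma joinable_disjoint:
  assumes c: "wf_cfg c" and st: "strs c = xs @ A # B # zs @ C # D # ys"
    and G1: "replacement A B = Some G1" and G2: "replacement C D = Some G2"
  shows "joinable (attach G1 xs (dart A) (dart B) (zs @ C # D # ys) c)
                  (attach G2 (xs @ A # B # zs) (dart C) (dart D) ys c)"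
    (is "joinable ?a ?b")
proof -
  have "gstep c ?a" using gstep_attachI[OF c st G1] .
  then have "gstep ?a (attach G2 (xs @ map (map_dart ((+) (cnt c))) (gouts G1) @ zs) (dart C) (dart D) ys ?a)"
    using gstep_attachI[OF wf_cfg_gstep[OF _ c]] G2 by (simp add: attach_fields)
  moreover have "gstep c ?b" using gstep_attachI[OF c _ G2] st by simp
  then have "gstep ?b (attach G1 xs (dart A) (dart B) (zs @ map (map_dart ((+) (cnt c))) (gouts G2) @ ys) ?b)"
    using gstep_attachI[OF wf_cfg_gstep[OF _ c]] G1 by (simp add: attach_fields)
  ultimately show ?thesis
    using attach_commute[OF c st replacement_gadget_ok[OF G1] replacement_gadget_ok[OF G2]]
    by (rule joinableI)
qed

lemma two_redexes_cases:
  assumes "xs1 @ A # B # ys1 = xs2 @ C # D # ys2" "length xs1 \<le> length xs2"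
  obtains "xs1 = xs2" "A = C" "B = D" "ys1 = ys2"
    | "xs2 = xs1 @ [A]" "B = C" "ys1 = D # ys2"
    | zs where "xs2 = xs1 @ A # B # zs" "ys1 = zs @ C # D # ys2"
proof -
  obtain us where us: "xs2 = xs1 @ us" "A # B # ys1 = us @ C # D # ys2"
    using assms by (auto simp: append_eq_append_conv2)
  show ?thesis
  proof (cases us)
    case (Cons u us')
    then show ?thesis using us that by (cases us') auto
  qed (use us that in auto)
qed

lemma joinable_sym: "joinable a b \<Longrightarrow> wf_cfg a \<Longrightarrow> joinable b a"
  unfolding joinable_def using cfg_iso_sym wf_cfg_gsteps by blast

lemma gstep_local_confluence:
  assumes c: "wf_cfg c" and "gstep c a" "gstep c b"
  shows "joinable a b"
proof -
  have main: "joinable a b"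
    if "gstep c a" "gstep c b" "strs c = xs1 @ A # B # ys1" "replacement A B = Some G1"
      "a = attach G1 xs1 (dart A) (dart B) ys1 c" "strs c = xs2 @ C # D # ys2"
      "replacement C D = Some G2" "b = attach G2 xs2 (dart C) (dart D) ys2 c"
      "length xs1 \<le> length xs2"
    for a b xs1 A B ys1 G1 xs2 C D ys2 G2
    using that(3,6,9)
  proof (rule two_redexes_cases[OF trans[OF sym]])
    assume "xs1 = xs2" "A = C" "B = D" "ys1 = ys2"
    then show ?thesis using that cfg_iso_refl by (auto simp: joinable_def)
  next
    assume "xs2 = xs1 @ [A]" "B = C" "ys1 = D # ys2"
    then show ?thesis using that joinable_overlap[OF c] by simp
  next
    fix zs assume "xs2 = xs1 @ A # B # zs" "ys1 = zs @ C # D # ys2"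
    then show ?thesis using that joinable_disjoint[OF c] by simp
  qed
  obtain xs1 A B ys1 G1 where 1: "strs c = xs1 @ A # B # ys1" "replacement A B = Some G1"
    "a = attach G1 xs1 (dart A) (dart B) ys1 c"
    using gstep_attachE[OF assms(2) c] by blast
  obtain xs2 C D ys2 G2 where 2: "strs c = xs2 @ C # D # ys2" "replacement C D = Some G2"
    "b = attach G2 xs2 (dart C) (dart D) ys2 c"
    using gstep_attachE[OF assms(3) c] by blast
  show ?thesis
  proof (cases "length xs1 \<le> length xs2")
    case True
    then show ?thesis using main[OF assms(2,3) 1 2] by blast
  next
    case False
    then have "joinable b a" using main[OF assms(3,2) 2 1] by simp
    then show ?thesis using joinable_sym wf_cfg_gstep[OF assms(3) c] by blast
  qed
qed

section \<open>Closing a configuration\<close>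

definition close_strand :: "nat \<Rightarrow> nat \<times> strand \<Rightarrow> web \<Rightarrow> web" where
  "close_strand N = (\<lambda>(i, (s, j, d)) W.
     W\<lparr> wopp := (wopp W)(d := N + i, N + i := d), wnxt := (wnxt W)(N + i := N + i),
        wout := (wout W)(N + i := s), wlab := (wlab W)(N + i := Some (BotPt i)) \<rparr>)"

definition open_web :: "cfg \<Rightarrow> web" where
  "open_web c = \<lparr> darts = {..<cnt c + length (strs c)}, wopp = copp c, wnxt = cnxt c,
     wout = cout c, wlab = clab c \<rparr>"

lemma close_web_foldr:
  "close_web c = foldr (close_strand (cnt c)) (zip [0..<length (strs c)] (strs c)) (open_web c)"
  by (simp add: close_web_def Let_def close_strand_def open_web_def)

lemma darts_foldr_close_strand [simp]: "darts (foldr (close_strand N) P W) = darts W"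
  by (induction P) (auto simp: close_strand_def split: prod.splits)

lemma foldr_close_strand_at:
  assumes "distinct (map fst P)" "distinct (map (dart \<circ> snd) P)" "\<forall>p\<in>set P. dart (snd p) < N"
    and "(i, (s, j, d)) \<in> set P"
  shows "wopp (foldr (close_strand N) P W) (N + i) = d \<and> wopp (foldr (close_strand N) P W) d = N + i
     \<and> wnxt (foldr (close_strand N) P W) (N + i) = N + i \<and> wout (foldr (close_strand N) P W) (N + i) = s
     \<and> wlab (foldr (close_strand N) P W) (N + i) = Some (BotPt i)"
  using assms
proof (induction P)
  case (Cons p P)
  obtain i' s' j' d' where p: "p = (i', (s', j', d'))" by (cases p) auto
  show ?case
  proof (cases "p = (i, (s, j, d))")
    case True
    then show ?thesis using Cons.prems by (simp add: close_strand_def)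
  next
    case False
    then have "(i, (s, j, d)) \<in> set P" using Cons.prems by auto
    moreover from this have "i' \<noteq> i" "d' \<noteq> d" "d < N" "d' < N"
      using Cons.prems p by (auto simp: rev_image_eqI)
    ultimately show ?thesis using Cons by (simp add: p close_strand_def)
  qed
qed simp

lemma foldr_close_strand_other:
  assumes "x \<notin> (+) N ` fst ` set P"
  shows "wnxt (foldr (close_strand N) P W) x = wnxt W x" "wout (foldr (close_strand N) P W) x = wout W x"
    "wlab (foldr (close_strand N) P W) x = wlab W x"
    "x \<notin> dart ` snd ` set P \<Longrightarrow> wopp (foldr (close_strand N) P W) x = wopp W x"
  using assms by (induction P) (auto simp: close_strand_def split: prod.splits)

lemma wf_cfg_indexed_strands:
  assumes "wf_cfg c"
  defines "P \<equiv> zip [0..<length (strs c)] (strs c)"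
  shows "distinct (map fst P)" "distinct (map (dart \<circ> snd) P)" "\<forall>p\<in>set P. dart (snd p) < cnt c"
proof -
  show "distinct (map fst P)" by (simp add: P_def)
  have "map (dart \<circ> snd) P = map dart (strs c)" by (simp add: P_def flip: map_map)
  then show "distinct (map (dart \<circ> snd) P)" using wf_cfgD(1)[OF assms(1)] by simp
  show "\<forall>p\<in>set P. dart (snd p) < cnt c"
    using wf_cfgD(2)[OF assms(1)] by (auto simp: P_def dest!: set_zip_rightD)
qed

lemma close_web_bottom:
  assumes c: "wf_cfg c" and i: "i < length (strs c)" "strs c ! i = (s, j, d)"
  shows "wopp (close_web c) (cnt c + i) = d \<and> wopp (close_web c) d = cnt c + i
    \<and> wnxt (close_web c) (cnt c + i) = cnt c + i \<and> wout (close_web c) (cnt c + i) = s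
    \<and> wlab (close_web c) (cnt c + i) = Some (BotPt i)"
proof -
  have "(i, (s, j, d)) \<in> set (zip [0..<length (strs c)] (strs c))"
    using i by (auto simp: in_set_zip intro!: exI[of _ i])
  then show ?thesis
    unfolding close_web_foldr using foldr_close_strand_at wf_cfg_indexed_strands[OF c] by blast
qed

lemma close_web_inner:
  assumes x: "x < cnt c"
  shows "wnxt (close_web c) x = cnxt c x" "wout (close_web c) x = cout c x" "wlab (close_web c) x = clab c x"
    and "x \<notin> dart ` set (strs c) \<Longrightarrow> wopp (close_web c) x = copp c x"
proof -
  let ?P = "zip [0..<length (strs c)] (strs c)"
  have not_bottom: "x \<notin> (+) (cnt c) ` fst ` set ?P" using x by auto
  then show "wnxt (close_web c) x = cnxt c x" "wout (close_web c) x = cout c x"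
    "wlab (close_web c) x = clab c x"
    unfolding close_web_foldr by (simp_all add: foldr_close_strand_other open_web_def)
  have "snd ` set ?P = set (strs c)" by (metis length_upt map_snd_zip minus_nat.diff_0 set_map)
  moreover assume "x \<notin> dart ` set (strs c)"
  ultimately show "wopp (close_web c) x = copp c x"
    unfolding close_web_foldr using not_bottom by (simp add: foldr_close_strand_other open_web_def)
qed

lemma darts_close_web: "darts (close_web c) = {..<cnt c + length (strs c)}"
  by (simp add: close_web_foldr open_web_def)

definition web_iso_at :: "(nat \<Rightarrow> nat) \<Rightarrow> web \<Rightarrow> web \<Rightarrow> nat \<Rightarrow> bool" where
  "web_iso_at F W1 W2 x \<longleftrightarrow> F (wopp W1 x) = wopp W2 (F x) \<and> F (wnxt W1 x) = wnxt W2 (F x)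
     \<and> wout W2 (F x) = wout W1 x \<and> wlab W2 (F x) = wlab W1 x"

lemma web_isoI:
  "bij_betw F (darts W1) (darts W2) \<Longrightarrow> (\<And>x. x \<in> darts W1 \<Longrightarrow> web_iso_at F W1 W2 x) \<Longrightarrow> web_iso W1 W2"
  unfolding web_iso_def web_iso_at_def by blast

context
  fixes f c1 c2
  assumes c1: "wf_cfg c1" and c2: "wf_cfg c2" and iso: "cfg_iso_by f c1 c2"
begin

lemma close_web_iso_at_bottom:
  assumes i: "i < length (strs c1)"
  shows "web_iso_at (extend_above (cnt c1) (cnt c2) f) (close_web c1) (close_web c2) (cnt c1 + i)"
proof -
  obtain s j d where e1: "strs c1 ! i = (s, j, d)" by (cases "strs c1 ! i") auto
  have strs2: "strs c2 = map (map_dart f) (strs c1)" using iso by (simp add: cfg_iso_by_def)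
  then have e2: "strs c2 ! i = (s, j, f d)" and i2: "i < length (strs c2)" using i e1 by simp_all
  have "d < cnt c1" using wf_cfgD(2)[OF c1 nth_mem[OF i]] e1 by simp
  then have "extend_above (cnt c1) (cnt c2) f (cnt c1 + i) = cnt c2 + i"
    "extend_above (cnt c1) (cnt c2) f d = f d"
    by (simp_all add: extend_above_def)
  then show ?thesis
    using close_web_bottom[OF c1 i e1] close_web_bottom[OF c2 i2 e2] by (simp add: web_iso_at_def)
qed

lemma close_web_iso_at_inner:
  assumes x: "x < cnt c1"
  shows "web_iso_at (extend_above (cnt c1) (cnt c2) f) (close_web c1) (close_web c2) x"
proof -
  let ?F = "extend_above (cnt c1) (cnt c2) f"
  have bij: "bij_betw f {..<cnt c1} {..<cnt c2}" and strs2: "strs c2 = map (map_dart f) (strs c1)"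
    using iso by (simp_all add: cfg_iso_by_def)
  have Fx: "?F x = f x" "f x < cnt c2" using x bij by (auto simp: extend_above_def bij_betw_def)
  have hom: "iso_at f c1 c2 x" using iso x by (simp add: cfg_iso_by_def)
  have closed: "?F (copp c1 x) = f (copp c1 x)" "?F (cnxt c1 x) = f (cnxt c1 x)"
    using wf_cfgD(4,5)[OF c1 x] by (simp_all add: extend_above_def)
  have opp: "?F (wopp (close_web c1) x) = wopp (close_web c2) (f x)"
  proof (cases "x \<in> dart ` set (strs c1)")
    case True
    then obtain i s j where i: "i < length (strs c1)" "strs c1 ! i = (s, j, x)"
      by (auto simp: in_set_conv_nth dart_def)
    then have "strs c2 ! i = (s, j, f x)" "i < length (strs c2)" using strs2 by simp_all
    then show ?thesis
      using close_web_bottom[OF c1 i] close_web_bottom[OF c2] by (simp add: extend_above_def)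
  next
    case False
    have "f x \<notin> dart ` set (strs c2)"
    proof
      assume "f x \<in> dart ` set (strs c2)"
      moreover have "dart ` set (strs c2) = f ` dart ` set (strs c1)" using strs2 by (simp add: image_image)
      ultimately obtain y where "y \<in> dart ` set (strs c1)" "f x = f y" by blast
      moreover from this(1) have "y < cnt c1" using wf_cfgD(2)[OF c1] by auto
      ultimately show False using False x bij by (auto simp: bij_betw_def inj_on_def)
    qed
    then show ?thesis
      using False close_web_inner(4)[OF x] close_web_inner(4)[OF Fx(2)] closed hom
      by (simp add: iso_at_def)
  qed
  show ?thesis
    using opp Fx closed hom close_web_inner(1-3)[OF x] close_web_inner(1-3)[OF Fx(2)]
    by (simp add: web_iso_at_def iso_at_def)
qed

end

lemma web_iso_close_web:
  assumes c1: "wf_cfg c1" and c2: "wf_cfg c2" and iso: "cfg_iso c1 c2"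
  shows "web_iso (close_web c1) (close_web c2)"
proof -
  obtain f where f: "cfg_iso_by f c1 c2" using iso by (auto simp: cfg_iso_def)
  then have "length (strs c2) = length (strs c1)" "bij_betw f {..<cnt c1} {..<cnt c2}"
    by (simp_all add: cfg_iso_by_def)
  then have "bij_betw (extend_above (cnt c1) (cnt c2) f) (darts (close_web c1)) (darts (close_web c2))"
    by (simp add: darts_close_web bij_betw_extend_above)
  moreover have "web_iso_at (extend_above (cnt c1) (cnt c2) f) (close_web c1) (close_web c2) x"
    if "x \<in> darts (close_web c1)" for x
  proof (cases "x < cnt c1")
    case False
    then show ?thesis
      using close_web_iso_at_bottom[OF c1 c2 f, of "x - cnt c1"] that by (simp add: darts_close_web)
  qed (rule close_web_iso_at_inner[OF c1 c2 f])
  ultimately show ?thesis by (rule web_isoI)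
qed

interpretation growth: terminating_modulo gstep cfg_iso wf_cfg
proof
  show "wf {(y, x). wf_cfg x \<and> gstep x y}" by (rule wf_gstep)
  show "wf_cfg y" if "gstep x y" "wf_cfg x" for x y using that by (rule wf_cfg_gstep)
  show "cfg_iso x x" for x by (rule cfg_iso_refl)
  show "cfg_iso y x" if "wf_cfg x" "cfg_iso x y" for x y using that by (rule cfg_iso_sym)
  show "cfg_iso x z" if "cfg_iso x y" "cfg_iso y z" for x y z using that by (rule cfg_iso_trans)
  show "\<exists>y'. gstep x' y' \<and> cfg_iso y y'" if "wf_cfg x" "wf_cfg x'" "cfg_iso x x'" "gstep x y" for x x' y
    using that by (rule gstep_cfg_iso)
  show "\<exists>y' z'. gstep\<^sup>*\<^sup>* y y' \<and> gstep\<^sup>*\<^sup>* z z' \<and> cfg_iso y' z'"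
    if "wf_cfg x" "gstep x y" "gstep x z" for x y z
    using gstep_local_confluence[OF that] by (simp add: joinable_def)
qed

theorem lemma2:
  fixes S :: "bool list" and J :: "int list" and c1 c2 :: cfg
  assumes "length S = length J"
    and "set J \<subseteq> {-1, 0, 1}"
    and "gstep\<^sup>*\<^sup>* (ginit S J) c1" and "gfinal c1"
    and "gstep\<^sup>*\<^sup>* (ginit S J) c2" and "gfinal c2"
  shows "web_iso (close_web c1) (close_web c2)"
proof -
  have init: "wf_cfg (ginit S J)" using wf_cfg_ginit assms(1,2) .
  have "cfg_iso c1 c2"
    using growth.normal_forms_equiv[OF init assms(3) _ assms(5)] assms(4,6)
    by (simp add: growth.normal_def gfinal_def)
  moreover have "wf_cfg c1" "wf_cfg c2" using wf_cfg_gsteps init assms(3,5) by blast+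
  ultimately show ?thesis using web_iso_close_web by blast
qed

end
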